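(* Let $\nu$ be fixed with $\Re(\nu)>-1$, let $g\in C^\infty[a,b]$ with $g'(x)\neq0$ for $x\in[a,b]$, and assume $g(\xi)=0$ for some $\xi\in[a,b]$ and $g(x)\neq0$ for $x\in[a,b]\setminus\{\xi\}$. Then $M(\nu,\omega)=\int_a^bJ_\nu(\omega g(x))\,dx=\mathcal{O}(\omega^{-1})$ as $\omega\to\infty$.
   Context: $J_\nu$ is the Bessel function of the first kind of order $\nu$. *)

theory Defs
  imports "HOL-Analysis.Analysis" "HOL-Library.Landau_Symbols"
begin

text \<open>Bessel function of the first kind, principal branch:
  J_nu(z) = (z/2)^nu * sum_k (-1)^k (z/2)^(2k) / (k! Gamma(k+nu+1)),
  with (z/2)^nu = exp(nu * Ln(z/2)) (principal logarithm); for nu = 0 the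
  prefactor is 1 (so that J_0(0) = 1).  rGamma = 1/Gamma avoids poles.\<close>
definition bessel_J :: "complex \<Rightarrow> complex \<Rightarrow> complex" where
  "bessel_J \<nu> z =
     (if \<nu> = 0 then 1 else (z / 2) powr \<nu>) *
     (\<Sum>k. (-1) ^ k * rGamma (of_nat k + \<nu> + 1) / fact k * (z / 2) ^ (2 * k))"

definition smooth_on_interval :: "(real \<Rightarrow> real) \<Rightarrow> real \<Rightarrow> real \<Rightarrow> (nat \<Rightarrow> real \<Rightarrow> real) \<Rightarrow> bool" where
  "smooth_on_interval g a b G \<longleftrightarrow> G 0 = g \<and>
     (\<forall>n. \<forall>x\<in>{a..b}. (G n has_real_derivative G (Suc n) x) (at x within {a..b}))"

end

theory Submission
  imports Defs
begin

text \<open>On each side of the zero \<open>\<xi>\<close> the function \<open>g\<close> has a fixed sign \<open>\<sigma>\<close>, and on the real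
  axis \<open>J\<^sub>\<nu>(-s) = e\<^sup>i\<^sup>\<pi>\<^sup>\<nu> J\<^sub>\<nu>(s)\<close>, so it suffices to bound \<open>\<integral> J\<^sub>\<nu>(\<omega> \<phi>(x)) dx\<close> for
  \<open>\<phi> = \<sigma> g \<ge> 0\<close> with \<open>\<phi>' \<noteq> 0\<close>. Integrating the power series of \<open>J\<^sub>\<nu>\<close> termwise gives an
  antiderivative \<open>F\<close> on \<open>[0, \<infinity>)\<close>, continuous at \<open>0\<close> because \<open>Re \<nu> > -1\<close>. It is bounded:
  by Bessel's equation the energy \<open>E = |J\<^sub>\<nu>|\<^sup>2 + |J\<^sub>\<nu>'|\<^sup>2\<close> satisfies \<open>E' \<le> |\<nu>|\<^sup>2 E/s\<^sup>2\<close>, so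
  \<open>J\<^sub>\<nu>\<close> and \<open>J\<^sub>\<nu>'\<close> are bounded on \<open>[1, \<infinity>)\<close>, and \<open>F + J\<^sub>\<nu>' + J\<^sub>\<nu>/s\<close> has the integrable
  derivative \<open>(\<nu>\<^sup>2 - 1) J\<^sub>\<nu>(s)/s\<^sup>2\<close>.
  Integration by parts,
  \<open>\<integral> J\<^sub>\<nu>(\<omega> \<phi>) = [F(\<omega> \<phi>)/(\<omega> \<phi>')] + \<integral> \<phi>'' F(\<omega> \<phi>)/(\<omega> \<phi>'\<^sup>2)\<close>,
  then bounds the integral by a constant times \<open>1/\<omega>\<close>.\<close>

lemma sums_of_nat_mult_powser:
  fixes c :: "nat \<Rightarrow> 'a::real_normed_field"
  assumes "summable (\<lambda>n. diffs c n * w ^ n)"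
  shows "(\<lambda>n. of_nat n * c n * w ^ n) sums (w * (\<Sum>n. diffs c n * w ^ n))"
proof -
  have "(\<lambda>n. w * (diffs c n * w ^ n)) sums (w * (\<Sum>n. diffs c n * w ^ n))"
    using assms by (intro sums_mult summable_sums)
  then have "(\<lambda>n. of_nat (Suc n) * c (Suc n) * w ^ Suc n) sums (w * (\<Sum>n. diffs c n * w ^ n))"
    by (simp add: diffs_def field_simps)
  from sums_Suc[OF this] show ?thesis
    by simp
qed

lemma powr_add_one: "(z::complex) \<noteq> 0 \<Longrightarrow> z powr (\<mu> + 1) = z powr \<mu> * z"
  using powr_add[of z \<mu> 1] by simp

lemma nonpos_Reals_of_real_pos: "s > 0 \<Longrightarrow> complex_of_real s \<notin> \<real>\<^sub>\<le>\<^sub>0"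
  by (auto simp: complex_nonpos_Reals_iff)

lemma has_real_derivative_norm_power2:
  fixes f :: "real \<Rightarrow> complex"
  assumes "(f has_vector_derivative f') (at s)"
  shows "((\<lambda>s. (norm (f s))\<^sup>2) has_real_derivative 2 * Re (f' * cnj (f s))) (at s)"
proof -
  from assms have re: "((\<lambda>x. Re (f x)) has_real_derivative Re f') (at s)"
    and im: "((\<lambda>x. Im (f x)) has_real_derivative Im f') (at s)"
    by (auto simp: has_vector_derivative_complex_iff)
  have "((\<lambda>s. (Re (f s))\<^sup>2 + (Im (f s))\<^sup>2) has_real_derivative 2 * Re (f' * cnj (f s))) (at s)"
    by (rule DERIV_cong, (rule derivative_eq_intros re im refl)+) (simp add: algebra_simps)
  then show ?thesis
    by (simp add: cmod_power2)
qed

lemma gronwall_inverse_square: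
  fixes E :: "real \<Rightarrow> real"
  assumes deriv: "\<And>s. s \<ge> 1 \<Longrightarrow> \<exists>D. (E has_real_derivative D) (at s) \<and> D \<le> K / s\<^sup>2 * E s"
    and "1 \<le> X"
  shows "E X * exp (K / X) \<le> E 1 * exp K"
proof -
  have "E X * exp (K / X) \<le> E 1 * exp (K / 1)"
  proof (rule DERIV_nonpos_imp_nonincreasing[OF \<open>1 \<le> X\<close>])
    fix s :: real assume "1 \<le> s" "s \<le> X"
    then obtain D where D: "(E has_real_derivative D) (at s)" "D \<le> K / s\<^sup>2 * E s"
      using deriv by blast
    have "((\<lambda>s. E s * exp (K / s)) has_real_derivative exp (K / s) * (D - K / s\<^sup>2 * E s)) (at s)"
      using \<open>1 \<le> s\<close> by (auto intro!: derivative_eq_intros D(1) simp: power2_eq_square field_simps)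
    moreover have "exp (K / s) * (D - K / s\<^sup>2 * E s) \<le> 0"
      using D(2) by (simp add: mult_nonneg_nonpos)
    ultimately show "\<exists>y. ((\<lambda>s. E s * exp (K / s)) has_real_derivative y) (at s) \<and> y \<le> 0"
      by blast
  qed
  then show ?thesis
    by simp
qed

lemma norm_diff_le_of_deriv_inverse_square:
  fixes f f' :: "real \<Rightarrow> 'a::banach"
  assumes "1 \<le> X"
    and deriv: "\<And>s. s \<in> {1..X} \<Longrightarrow> (f has_vector_derivative f' s) (at s within {1..X})"
    and bound: "\<And>s. s \<in> {1..X} \<Longrightarrow> norm (f' s) \<le> C / s\<^sup>2"
  shows "norm (f X - f 1) \<le> C"
proof -
  have f': "(f' has_integral (f X - f 1)) {1..X}"
    by (rule fundamental_theorem_of_calculus[OF \<open>1 \<le> X\<close> deriv])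
  have "((\<lambda>s. C / s\<^sup>2) has_integral (- C / X - (- C / 1))) {1..X}"
  proof (rule fundamental_theorem_of_calculus[OF \<open>1 \<le> X\<close>])
    fix s assume "s \<in> {1..X}"
    then show "((\<lambda>s. - C / s) has_vector_derivative C / s\<^sup>2) (at s within {1..X})"
      by (auto intro!: derivative_eq_intros simp: has_real_derivative_iff_has_vector_derivative[symmetric]
               power2_eq_square)
  qed
  then have C: "((\<lambda>s. C / s\<^sup>2) has_integral (C - C / X)) {1..X}"
    by simp
  have "norm (f X - f 1) \<le> (C - C / X) \<bullet> 1"
    by (rule has_integral_norm_bound_integral_component[OF f' C]) (use bound in auto)
  moreover have "0 \<le> C / X"
    using order_trans[OF norm_ge_zero bound[of 1]] \<open>1 \<le> X\<close> by simp
  ultimately show ?thesis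
    by simp
qed

lemma connected_nonvanishing_sign:
  fixes f :: "real \<Rightarrow> real"
  assumes "connected S" and "continuous_on S f" and nz: "\<And>x. x \<in> S \<Longrightarrow> f x \<noteq> 0"
  obtains \<sigma> where "\<sigma> = 1 \<or> \<sigma> = -1" and "\<And>x. x \<in> S \<Longrightarrow> \<sigma> * f x > 0"
proof -
  have interval: "is_interval (f ` S)"
    using connected_continuous_image[OF assms(2,1)] by (simp add: is_interval_connected_1)
  have same_sign: "f y > 0" if "x \<in> S" "y \<in> S" "f x > 0" for x y
  proof (rule ccontr)
    assume "\<not> f y > 0"
    then have "f y \<le> 0"
      by simp
    with interval[unfolded is_interval_1, rule_format, of "f y" "f x" 0] that have "0 \<in> f ` S"
      by simp
    then show False
      using nz by auto
  qed
  show ?thesis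
  proof (cases "\<exists>x\<in>S. f x > 0")
    case True
    then obtain x0 where "x0 \<in> S" "f x0 > 0"
      by blast
    then show ?thesis
      using that[of 1] same_sign by simp
  next
    case False
    then show ?thesis
      using that[of "-1"] nz by fastforce
  qed
qed

section \<open>Integrals of a function with bounded antiderivative along a phase\<close>

lemma has_integral_comp_by_parts:
  fixes F f :: "real \<Rightarrow> 'a::banach" and \<phi> \<phi>' \<phi>'' :: "real \<Rightarrow> real"
  assumes F_cont: "continuous_on {0..} F"
    and F_deriv: "\<And>s. s > 0 \<Longrightarrow> (F has_vector_derivative f s) (at s)"
    and "p \<le> q" and "finite Z" and "\<omega> > 0"
    and \<phi>: "\<And>x. x \<in> {p..q} \<Longrightarrow> (\<phi> has_real_derivative \<phi>' x) (at x within {p..q})"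
    and \<phi>': "\<And>x. x \<in> {p..q} \<Longrightarrow> (\<phi>' has_real_derivative \<phi>'' x) (at x within {p..q})"
    and \<phi>''_cont: "continuous_on {p..q} \<phi>''"
    and \<phi>'_nz: "\<And>x. x \<in> {p..q} \<Longrightarrow> \<phi>' x \<noteq> 0"
    and \<phi>_nonneg: "\<And>x. x \<in> {p..q} \<Longrightarrow> \<phi> x \<ge> 0"
    and \<phi>_pos: "\<And>x. x \<in> {p..q} - Z \<Longrightarrow> \<phi> x > 0"
  defines "H \<equiv> \<lambda>x. (1 / (\<omega> * \<phi>' x)) *\<^sub>R F (\<omega> * \<phi> x)"
    and "k \<equiv> \<lambda>x. (\<phi>'' x / (\<omega> * (\<phi>' x)\<^sup>2)) *\<^sub>R F (\<omega> * \<phi> x)"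
  shows "((\<lambda>x. f (\<omega> * \<phi> x)) has_integral (H q - H p + integral {p..q} k)) {p..q}"
proof -
  have \<phi>_cont: "continuous_on {p..q} \<phi>" and \<phi>'_cont: "continuous_on {p..q} \<phi>'"
    using DERIV_continuous_on \<phi> \<phi>' by blast+
  have F\<phi>_cont: "continuous_on {p..q} (\<lambda>x. F (\<omega> * \<phi> x))"
    by (rule continuous_on_compose2[OF F_cont])
       (use \<phi>_nonneg \<open>\<omega> > 0\<close> in \<open>auto intro!: continuous_intros \<phi>_cont\<close>)
  have H_cont: "continuous_on {p..q} H" and k_cont: "continuous_on {p..q} k"
    unfolding H_def k_def using \<phi>'_nz \<open>\<omega> > 0\<close>
    by (auto intro!: continuous_intros \<phi>'_cont \<phi>''_cont F\<phi>_cont)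
  have "(H has_vector_derivative f (\<omega> * \<phi> x) - k x) (at x)" if x: "x \<in> {p<..<q} - Z" for x
  proof -
    have x': "x \<in> {p..q}" and "at x within {p..q} = at x"
      using x by (auto intro!: at_within_interior)
    then have d\<phi>: "(\<phi> has_real_derivative \<phi>' x) (at x)" and d\<phi>': "(\<phi>' has_real_derivative \<phi>'' x) (at x)"
      using \<phi>[OF x'] \<phi>'[OF x'] by simp_all
    have "((\<lambda>x. \<omega> * \<phi> x) has_vector_derivative \<omega> * \<phi>' x) (at x)"
      using DERIV_cmult[OF d\<phi>] by (simp add: has_real_derivative_iff_has_vector_derivative)
    then have dF: "((\<lambda>x. F (\<omega> * \<phi> x)) has_vector_derivative (\<omega> * \<phi>' x) *\<^sub>R f (\<omega> * \<phi> x)) (at x)"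
      using vector_diff_chain_at[OF _ F_deriv, of "\<lambda>x. \<omega> * \<phi> x"] x \<phi>_pos \<open>\<omega> > 0\<close>
      by (simp add: o_def)
    have dinv: "((\<lambda>x. 1 / (\<omega> * \<phi>' x)) has_real_derivative - (\<omega> * \<phi>'' x) / (\<omega> * \<phi>' x)\<^sup>2) (at x)"
      using \<phi>'_nz[OF x'] \<open>\<omega> > 0\<close>
      by (auto intro!: derivative_eq_intros d\<phi>' simp: power2_eq_square field_simps)
    show ?thesis
      unfolding H_def
      by (rule has_vector_derivative_eq_rhs[OF has_vector_derivative_scaleR[OF dinv dF]])
         (use \<phi>'_nz[OF x'] \<open>\<omega> > 0\<close> in \<open>simp add: k_def power2_eq_square algebra_simps\<close>)
  qed
  then have "((\<lambda>x. f (\<omega> * \<phi> x) - k x) has_integral (H q - H p)) {p..q}"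
    by (intro fundamental_theorem_of_calculus_interior_strong[OF \<open>finite Z\<close> \<open>p \<le> q\<close> _ H_cont])
  then have "((\<lambda>x. (f (\<omega> * \<phi> x) - k x) + k x) has_integral (H q - H p + integral {p..q} k)) {p..q}"
    by (intro has_integral_add integrable_integral integrable_continuous_real k_cont)
  then show ?thesis
    by simp
qed

lemma norm_integral_comp_antiderivative_le:
  fixes F f :: "real \<Rightarrow> 'a::banach" and \<phi> \<phi>' \<phi>'' :: "real \<Rightarrow> real"
  assumes F_cont: "continuous_on {0..} F"
    and F_deriv: "\<And>s. s > 0 \<Longrightarrow> (F has_vector_derivative f s) (at s)"
    and F_bound: "\<And>s. s \<ge> 0 \<Longrightarrow> norm (F s) \<le> M"
    and "p \<le> q" and "finite Z" and "\<omega> > 0"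
    and \<phi>: "\<And>x. x \<in> {p..q} \<Longrightarrow> (\<phi> has_real_derivative \<phi>' x) (at x within {p..q})"
    and \<phi>': "\<And>x. x \<in> {p..q} \<Longrightarrow> (\<phi>' has_real_derivative \<phi>'' x) (at x within {p..q})"
    and \<phi>''_cont: "continuous_on {p..q} \<phi>''"
    and \<phi>'_nz: "\<And>x. x \<in> {p..q} \<Longrightarrow> \<phi>' x \<noteq> 0"
    and \<phi>_nonneg: "\<And>x. x \<in> {p..q} \<Longrightarrow> \<phi> x \<ge> 0"
    and \<phi>_pos: "\<And>x. x \<in> {p..q} - Z \<Longrightarrow> \<phi> x > 0"
    and "m > 0" and m: "\<And>x. x \<in> {p..q} \<Longrightarrow> m \<le> \<bar>\<phi>' x\<bar>"
    and K: "\<And>x. x \<in> {p..q} \<Longrightarrow> \<bar>\<phi>'' x\<bar> \<le> K"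
  shows "norm (integral {p..q} (\<lambda>x. f (\<omega> * \<phi> x))) \<le> (2 * M / m + (q - p) * K * M / m\<^sup>2) / \<omega>"
proof -
  let ?H = "\<lambda>x. (1 / (\<omega> * \<phi>' x)) *\<^sub>R F (\<omega> * \<phi> x)"
  let ?k = "\<lambda>x. (\<phi>'' x / (\<omega> * (\<phi>' x)\<^sup>2)) *\<^sub>R F (\<omega> * \<phi> x)"
  have FM: "norm (F (\<omega> * \<phi> x)) \<le> M" if "x \<in> {p..q}" for x
    using F_bound \<phi>_nonneg[OF that] \<open>\<omega> > 0\<close> by simp
  have H: "norm (?H x) \<le> M / (\<omega> * m)" if "x \<in> {p..q}" for x
    using FM[OF that] m[OF that] \<open>m > 0\<close> \<open>\<omega> > 0\<close>
    by (auto simp: abs_mult intro!: frac_le mult_left_mono intro: order_trans[OF norm_ge_zero])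
  have k: "norm (?k x) \<le> K * M / (\<omega> * m\<^sup>2)" if "x \<in> {p..q}" for x
  proof -
    have "m\<^sup>2 \<le> (\<phi>' x)\<^sup>2"
      using m[OF that] \<open>m > 0\<close> by (simp add: abs_le_square_iff[symmetric])
    moreover have "\<bar>\<phi>'' x\<bar> * norm (F (\<omega> * \<phi> x)) \<le> K * M"
      using K[OF that] FM[OF that] by (intro mult_mono) (auto intro: order_trans[OF abs_ge_zero])
    ultimately show ?thesis
      using \<open>m > 0\<close> \<open>\<omega> > 0\<close> by (auto simp: abs_mult intro!: frac_le order_trans[OF _ \<open>_ \<le> K * M\<close>])
  qed
  have "continuous_on {p..q} (\<lambda>x. F (\<omega> * \<phi> x))"
    by (rule continuous_on_compose2[OF F_cont])
       (use \<phi>_nonneg \<open>\<omega> > 0\<close> in \<open>auto intro!: continuous_intros DERIV_continuous_on[OF \<phi>]\<close>)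
  then have k_cont: "continuous_on {p..q} ?k"
    using \<phi>'_nz \<open>\<omega> > 0\<close> by (auto intro!: continuous_intros \<phi>''_cont DERIV_continuous_on[OF \<phi>'])
  have by_parts: "integral {p..q} (\<lambda>x. f (\<omega> * \<phi> x)) = ?H q - ?H p + integral {p..q} ?k"
    by (rule integral_unique[OF has_integral_comp_by_parts[OF F_cont F_deriv \<open>p \<le> q\<close> \<open>finite Z\<close> \<open>\<omega> > 0\<close>
          \<phi> \<phi>' \<phi>''_cont \<phi>'_nz \<phi>_nonneg \<phi>_pos]])
  have "norm (integral {p..q} (\<lambda>x. f (\<omega> * \<phi> x))) \<le> norm (?H q) + norm (?H p) + norm (integral {p..q} ?k)"
    unfolding by_parts
    using norm_triangle_ineq[of "?H q - ?H p" "integral {p..q} ?k"] norm_triangle_ineq4[of "?H q" "?H p"]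
    by linarith
  also have "\<dots> \<le> M / (\<omega> * m) + M / (\<omega> * m) + K * M / (\<omega> * m\<^sup>2) * (q - p)"
    using H[of q] H[of p] integral_bound[OF \<open>p \<le> q\<close> k_cont k] \<open>p \<le> q\<close> by (intro add_mono) auto
  also have "\<dots> = (2 * M / m + (q - p) * K * M / m\<^sup>2) / \<omega>"
    using \<open>m > 0\<close> \<open>\<omega> > 0\<close> by (simp add: field_simps)
  finally show ?thesis .
qed

lemma continuous_on_nonzero_bounded_below:
  fixes h :: "real \<Rightarrow> real"
  assumes "continuous_on {p..q} h" and "\<And>x. x \<in> {p..q} \<Longrightarrow> h x \<noteq> 0"
  obtains m where "m > 0" and "\<And>x. x \<in> {p..q} \<Longrightarrow> m \<le> \<bar>h x\<bar>"
proof (cases "p \<le> q")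
  case True
  then obtain x0 where "x0 \<in> {p..q}" and "\<And>x. x \<in> {p..q} \<Longrightarrow> \<bar>h x0\<bar> \<le> \<bar>h x\<bar>"
    using continuous_attains_inf[OF compact_Icc _ continuous_on_rabs[OF assms(1)]] by auto
  then show ?thesis
    using that[of "\<bar>h x0\<bar>"] assms(2) by auto
qed (use that[of 1] in auto)

lemma integral_comp_antiderivative_bound:
  fixes F f :: "real \<Rightarrow> 'a::banach" and \<phi> \<phi>' \<phi>'' :: "real \<Rightarrow> real"
  assumes F_cont: "continuous_on {0..} F"
    and F_deriv: "\<And>s. s > 0 \<Longrightarrow> (F has_vector_derivative f s) (at s)"
    and F_bound: "\<And>s. s \<ge> 0 \<Longrightarrow> norm (F s) \<le> M"
    and "p \<le> q" and "finite Z"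
    and \<phi>: "\<And>x. x \<in> {p..q} \<Longrightarrow> (\<phi> has_real_derivative \<phi>' x) (at x within {p..q})"
    and \<phi>': "\<And>x. x \<in> {p..q} \<Longrightarrow> (\<phi>' has_real_derivative \<phi>'' x) (at x within {p..q})"
    and \<phi>''_cont: "continuous_on {p..q} \<phi>''"
    and \<phi>'_nz: "\<And>x. x \<in> {p..q} \<Longrightarrow> \<phi>' x \<noteq> 0"
    and \<phi>_nonneg: "\<And>x. x \<in> {p..q} \<Longrightarrow> \<phi> x \<ge> 0"
    and \<phi>_pos: "\<And>x. x \<in> {p..q} - Z \<Longrightarrow> \<phi> x > 0"
  obtains C where "\<And>\<omega>. \<omega> > 0 \<Longrightarrow> (\<lambda>x. f (\<omega> * \<phi> x)) integrable_on {p..q}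
      \<and> norm (integral {p..q} (\<lambda>x. f (\<omega> * \<phi> x))) \<le> C / \<omega>"
proof -
  obtain m where "m > 0" and m: "\<And>x. x \<in> {p..q} \<Longrightarrow> m \<le> \<bar>\<phi>' x\<bar>"
    using continuous_on_nonzero_bounded_below[OF DERIV_continuous_on[OF \<phi>'] \<phi>'_nz] by blast
  obtain K where K: "\<And>x. x \<in> {p..q} \<Longrightarrow> \<bar>\<phi>'' x\<bar> \<le> K"
    using continuous_on_compact_bound[OF compact_Icc \<phi>''_cont] by auto
  show ?thesis
  proof (rule that, rule conjI)
    fix \<omega> :: real assume "\<omega> > 0"
    show "(\<lambda>x. f (\<omega> * \<phi> x)) integrable_on {p..q}"
      using has_integral_comp_by_parts[OF F_cont F_deriv \<open>p \<le> q\<close> \<open>finite Z\<close> \<open>\<omega> > 0\<close>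
          \<phi> \<phi>' \<phi>''_cont \<phi>'_nz \<phi>_nonneg \<phi>_pos] by blast
    show "norm (integral {p..q} (\<lambda>x. f (\<omega> * \<phi> x))) \<le> (2 * M / m + (q - p) * K * M / m\<^sup>2) / \<omega>"
      by (rule norm_integral_comp_antiderivative_le[OF F_cont F_deriv F_bound \<open>p \<le> q\<close> \<open>finite Z\<close>
            \<open>\<omega> > 0\<close> \<phi> \<phi>' \<phi>''_cont \<phi>'_nz \<phi>_nonneg \<phi>_pos \<open>m > 0\<close> m K])
  qed
qed

section \<open>The power series of the Bessel function\<close>

definition bessel_coeff :: "complex \<Rightarrow> nat \<Rightarrow> complex" where
  "bessel_coeff \<mu> k = rGamma (of_nat k + \<mu> + 1) / fact k"

definition bessel_series :: "complex \<Rightarrow> complex \<Rightarrow> complex" where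
  "bessel_series \<mu> w = (\<Sum>k. bessel_coeff \<mu> k * w ^ k)"

lemma bessel_coeff_Suc:
  "bessel_coeff \<mu> (Suc k) * (of_nat k + \<mu> + 1) * of_nat (Suc k) = bessel_coeff \<mu> k"
proof -
  have "rGamma (of_nat (Suc k) + \<mu> + 1) = rGamma (of_nat k + \<mu> + 1 + 1)"
    by (simp add: add_ac)
  then have "bessel_coeff \<mu> (Suc k) * (of_nat k + \<mu> + 1) * of_nat (Suc k)
      = (of_nat k + \<mu> + 1) * rGamma (of_nat k + \<mu> + 1 + 1) / fact k"
    unfolding bessel_coeff_def fact_Suc by (simp add: field_simps del: of_nat_Suc)
  also have "\<dots> = bessel_coeff \<mu> k"
    by (simp only: rGamma_plus1 bessel_coeff_def)
  finally show ?thesis .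
qed

lemma bessel_coeff_shift:
  "(of_nat k + \<mu> + 1) * bessel_coeff (\<mu> + 1) k = bessel_coeff \<mu> k"
  using rGamma_plus1[of "of_nat k + \<mu> + 1"]
  by (simp add: bessel_coeff_def add_ac)

lemma summable_bessel_series: "summable (\<lambda>k. bessel_coeff \<mu> k * w ^ k)"
proof (rule summable_ratio_test[where c="1/2" and N="nat \<lceil>2 * norm w + norm \<mu>\<rceil>"])
  fix k assume "k \<ge> nat \<lceil>2 * norm w + norm \<mu>\<rceil>"
  then have k: "2 * norm w + norm \<mu> \<le> real k" by linarith
  have "real k + 1 - norm \<mu> \<le> norm (of_nat k + \<mu> + 1 :: complex)"
    using norm_diff_ineq[of "of_nat k + 1 :: complex" \<mu>] norm_of_nat[of "Suc k", where 'a=complex]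
    by (simp add: ac_simps)
  with k have "2 * norm w \<le> norm (of_nat k + \<mu> + 1)"
    by linarith
  also have "\<dots> \<le> norm (of_nat k + \<mu> + 1) * (real k + 1)"
    using mult_left_mono[of 1 "real k + 1" "norm (of_nat k + \<mu> + 1 :: complex)"] by simp
  finally have "2 * norm w \<le> norm (of_nat k + \<mu> + 1) * (real k + 1)" .
  then have "norm (bessel_coeff \<mu> (Suc k)) * norm w
      \<le> norm (bessel_coeff \<mu> (Suc k)) * norm (of_nat k + \<mu> + 1) * (real k + 1) / 2"
    by (simp add: mult_left_mono mult.assoc)
  also have "\<dots> = norm (bessel_coeff \<mu> k) / 2"
    using arg_cong[OF bessel_coeff_Suc[of \<mu> k], of norm] norm_of_nat[of "Suc k", where 'a=complex]
    by (simp add: norm_mult add.commute)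
  finally have "norm (bessel_coeff \<mu> (Suc k)) * norm w * norm w ^ k \<le> norm (bessel_coeff \<mu> k) / 2 * norm w ^ k"
    by (rule mult_right_mono) simp
  then show "norm (bessel_coeff \<mu> (Suc k) * w ^ Suc k) \<le> 1/2 * norm (bessel_coeff \<mu> k * w ^ k)"
    by (simp add: norm_mult norm_power algebra_simps)
qed simp

lemma diffs_bessel_coeff: "diffs (bessel_coeff \<mu>) = bessel_coeff (\<mu> + 1)"
proof
  fix n
  have "of_nat (Suc n) + \<mu> + 1 = of_nat n + (\<mu> + 1) + 1"
    by simp
  then show "diffs (bessel_coeff \<mu>) n = bessel_coeff (\<mu> + 1) n"
    by (simp add: diffs_def bessel_coeff_def fact_Suc del: of_nat_Suc)
qed

lemma has_field_derivative_bessel_series: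
  "(bessel_series \<mu> has_field_derivative bessel_series (\<mu> + 1) w) (at w)"
  unfolding bessel_series_def[abs_def]
  using termdiffs_strong_converges_everywhere[OF summable_bessel_series, of \<mu> w]
  by (simp add: diffs_bessel_coeff)

lemma bessel_series_recurrence:
  "bessel_series \<mu> w = (\<mu> + 1) * bessel_series (\<mu> + 1) w + w * bessel_series (\<mu> + 2) w"
proof -
  have "(\<lambda>n. (\<mu> + 1) * (bessel_coeff (\<mu> + 1) n * w ^ n)) sums ((\<mu> + 1) * bessel_series (\<mu> + 1) w)"
    unfolding bessel_series_def by (intro sums_mult summable_sums summable_bessel_series)
  moreover have "(\<lambda>n. of_nat n * bessel_coeff (\<mu> + 1) n * w ^ n) sums (w * bessel_series (\<mu> + 2) w)"
    using sums_of_nat_mult_powser[of "bessel_coeff (\<mu> + 1)" w] summable_bessel_series[of "\<mu> + 1 + 1" w]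
    by (simp add: diffs_bessel_coeff bessel_series_def add.assoc)
  ultimately have "(\<lambda>n. (\<mu> + 1) * (bessel_coeff (\<mu> + 1) n * w ^ n) + of_nat n * bessel_coeff (\<mu> + 1) n * w ^ n)
      sums ((\<mu> + 1) * bessel_series (\<mu> + 1) w + w * bessel_series (\<mu> + 2) w)"
    by (rule sums_add)
  also have "(\<lambda>n. (\<mu> + 1) * (bessel_coeff (\<mu> + 1) n * w ^ n) + of_nat n * bessel_coeff (\<mu> + 1) n * w ^ n)
      = (\<lambda>n. bessel_coeff \<mu> n * w ^ n)"
  proof
    fix n
    show "(\<mu> + 1) * (bessel_coeff (\<mu> + 1) n * w ^ n) + of_nat n * bessel_coeff (\<mu> + 1) n * w ^ n
        = bessel_coeff \<mu> n * w ^ n"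
      unfolding bessel_coeff_shift[of n \<mu>, symmetric] by (simp add: algebra_simps)
  qed
  finally show ?thesis
    unfolding bessel_series_def by (rule sums_unique[symmetric])
qed

text \<open>Unlike \<open>bessel_J\<close>, this has no special case for order \<open>0\<close>, so that the derivative and the
  recurrence below hold uniformly in the order.\<close>

definition bessel_fun :: "complex \<Rightarrow> complex \<Rightarrow> complex" where
  "bessel_fun \<mu> z = (z / 2) powr \<mu> * bessel_series \<mu> (- (z ^ 2) / 4)"

lemma bessel_J_eq_bessel_fun:
  assumes "z \<noteq> 0"
  shows "bessel_J \<nu> z = bessel_fun \<nu> z"
proof -
  have "(-1) ^ k * rGamma (of_nat k + \<nu> + 1) / fact k * (z / 2) ^ (2 * k)
      = bessel_coeff \<nu> k * (- (z ^ 2) / 4) ^ k" for k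
  proof -
    have "(z / 2) ^ (2 * k) = (z ^ 2 / 4) ^ k"
      by (simp add: power_mult power_divide)
    moreover have "(- (z ^ 2) / 4) ^ k = (-1) ^ k * (z ^ 2 / 4) ^ k"
      by (metis minus_divide_left power_minus)
    ultimately show ?thesis
      by (simp add: bessel_coeff_def)
  qed
  then show ?thesis
    using assms by (simp add: bessel_J_def bessel_fun_def bessel_series_def)
qed

lemma bessel_fun_minus_real:
  assumes "s > 0"
  shows "bessel_fun \<nu> (of_real (- s)) = exp (\<i> * pi * \<nu>) * bessel_fun \<nu> (of_real s)"
proof -
  have "Ln (- complex_of_real (s / 2)) = Ln (complex_of_real (s / 2)) + \<i> * pi"
    using Ln_minus[of "complex_of_real (s / 2)"] assms by simp
  then have "(complex_of_real (- s) / 2) powr \<nu> = exp (\<i> * pi * \<nu>) * (complex_of_real s / 2) powr \<nu>"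
    using assms by (simp add: powr_def algebra_simps exp_add)
  then show ?thesis
    by (simp add: bessel_fun_def)
qed

lemma has_field_derivative_bessel_fun:
  assumes z: "z \<notin> \<real>\<^sub>\<le>\<^sub>0"
  shows "(bessel_fun \<mu> has_field_derivative (\<mu> / z * bessel_fun \<mu> z - bessel_fun (\<mu> + 1) z)) (at z)"
proof -
  have z0: "z \<noteq> 0" and z2: "z / 2 \<notin> \<real>\<^sub>\<le>\<^sub>0"
    using z by (auto simp: complex_nonpos_Reals_iff)
  have "((\<lambda>z. (z / 2) powr \<mu>) has_field_derivative \<mu> * (z / 2) powr (\<mu> - 1) * (1 / 2)) (at z)"
    by (rule DERIV_chain2[where g="\<lambda>z. z / 2", OF has_field_derivative_powr[OF z2]])
       (auto intro!: derivative_eq_intros)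
  moreover have "((\<lambda>z. bessel_series \<mu> (- (z ^ 2) / 4)) has_field_derivative
      bessel_series (\<mu> + 1) (- (z ^ 2) / 4) * (- z / 2)) (at z)"
    by (rule DERIV_chain2[OF has_field_derivative_bessel_series]) (auto intro!: derivative_eq_intros)
  moreover have "(z / 2) powr (\<mu> - 1) = (z / 2) powr \<mu> / (z / 2)"
    using powr_add_one[of "z / 2" "\<mu> - 1"] z0 by (simp add: field_simps)
  moreover have "(z / 2) powr (\<mu> + 1) = (z / 2) powr \<mu> * (z / 2)"
    using powr_add_one z0 by simp
  ultimately show ?thesis
    unfolding bessel_fun_def[abs_def] using z0
    by (auto elim!: DERIV_cong[OF DERIV_mult] simp: field_simps)
qed

lemma bessel_fun_recurrence:
  assumes "z \<noteq> 0"
  shows "bessel_fun (\<mu> + 2) z = 2 * (\<mu> + 1) / z * bessel_fun (\<mu> + 1) z - bessel_fun \<mu> z"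
proof -
  have p1: "(z / 2) powr (\<mu> + 1) = (z / 2) powr \<mu> * (z / 2)"
    and p2: "(z / 2) powr (\<mu> + 2) = (z / 2) powr \<mu> * (z / 2) * (z / 2)"
    using powr_add_one[of "z / 2" "\<mu> + 1"] powr_add_one[of "z / 2" \<mu>] assms
    by (simp_all add: add.assoc)
  show ?thesis
    unfolding bessel_fun_def bessel_series_recurrence[of \<mu>] p1 p2 using assms
    by (simp add: field_simps power2_eq_square)
qed

definition bessel_deriv :: "complex \<Rightarrow> complex \<Rightarrow> complex" where
  "bessel_deriv \<nu> z = \<nu> / z * bessel_fun \<nu> z - bessel_fun (\<nu> + 1) z"

lemma has_field_derivative_bessel_deriv:
  assumes z: "z \<notin> \<real>\<^sub>\<le>\<^sub>0"
  shows "(bessel_deriv \<nu> has_field_derivative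
           (\<nu>^2 / z^2 - 1) * bessel_fun \<nu> z - bessel_deriv \<nu> z / z) (at z)"
proof -
  have z0: "z \<noteq> 0"
    using z by auto
  show ?thesis
    unfolding bessel_deriv_def[abs_def] using z0
    by (auto intro!: derivative_eq_intros has_field_derivative_bessel_fun[OF z]
             simp: bessel_fun_recurrence field_simps power2_eq_square)
qed

section \<open>A bounded antiderivative on the half-line\<close>

definition bessel_antider_coeff :: "complex \<Rightarrow> nat \<Rightarrow> complex" where
  "bessel_antider_coeff \<mu> k = bessel_coeff \<mu> k / (2 * of_nat k + \<mu> + 1)"

definition bessel_antider_series :: "complex \<Rightarrow> complex \<Rightarrow> complex" where
  "bessel_antider_series \<mu> w = (\<Sum>k. bessel_antider_coeff \<mu> k * w ^ k)"

text \<open>Termwise integration of \<open>(z/2)\<^sup>2\<^sup>k\<^sup>+\<^sup>\<mu>\<close> to \<open>2 (z/2)\<^sup>2\<^sup>k\<^sup>+\<^sup>\<mu>\<^sup>+\<^sup>1 / (2k + \<mu> + 1)\<close>.\<close>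

definition bessel_antider :: "complex \<Rightarrow> complex \<Rightarrow> complex" where
  "bessel_antider \<mu> z = 2 * (z / 2) powr (\<mu> + 1) * bessel_antider_series \<mu> (- (z ^ 2) / 4)"

lemma Re_le_norm_antider_denom:
  "Re \<mu> + 1 \<le> norm (2 * of_nat k + \<mu> + 1)"
  using complex_Re_le_cmod[of "2 * of_nat k + \<mu> + 1"] by simp

lemma summable_bessel_antider_series:
  assumes "Re \<mu> > -1"
  shows "summable (\<lambda>k. bessel_antider_coeff \<mu> k * w ^ k)"
proof (rule summable_comparison_test)
  show "summable (\<lambda>k. norm (bessel_coeff \<mu> k * w ^ k) / (Re \<mu> + 1))"
    by (intro summable_divide powser_insidea[OF summable_bessel_series[of \<mu> "of_real (norm w + 1)"]])
       simp
  have "norm (bessel_antider_coeff \<mu> k * w ^ k) \<le> norm (bessel_coeff \<mu> k * w ^ k) / (Re \<mu> + 1)" for k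
    unfolding bessel_antider_coeff_def norm_mult norm_divide times_divide_eq_left
    using assms Re_le_norm_antider_denom[of \<mu> k] by (intro divide_left_mono mult_pos_pos) auto
  then show "\<exists>N. \<forall>k\<ge>N. norm (bessel_antider_coeff \<mu> k * w ^ k) \<le> norm (bessel_coeff \<mu> k * w ^ k) / (Re \<mu> + 1)"
    by blast
qed

lemma bessel_antider_series_ode:
  assumes "Re \<mu> > -1"
  shows "(\<mu> + 1) * bessel_antider_series \<mu> w + 2 * (w * (\<Sum>n. diffs (bessel_antider_coeff \<mu>) n * w ^ n))
           = bessel_series \<mu> w"
proof -
  have "(\<lambda>n. (\<mu> + 1) * (bessel_antider_coeff \<mu> n * w ^ n)) sums ((\<mu> + 1) * bessel_antider_series \<mu> w)"
    unfolding bessel_antider_series_def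
    by (rule sums_mult[OF summable_sums[OF summable_bessel_antider_series[OF assms]]])
  moreover have "summable (\<lambda>n. diffs (bessel_antider_coeff \<mu>) n * w ^ n)"
    by (rule termdiff_converges_all) (use summable_bessel_antider_series[OF assms] in blast)
  then have "(\<lambda>n. 2 * (of_nat n * bessel_antider_coeff \<mu> n * w ^ n))
      sums (2 * (w * (\<Sum>n. diffs (bessel_antider_coeff \<mu>) n * w ^ n)))"
    by (rule sums_mult[OF sums_of_nat_mult_powser])
  ultimately have "(\<lambda>n. (\<mu> + 1) * (bessel_antider_coeff \<mu> n * w ^ n) + 2 * (of_nat n * bessel_antider_coeff \<mu> n * w ^ n))
      sums ((\<mu> + 1) * bessel_antider_series \<mu> w + 2 * (w * (\<Sum>n. diffs (bessel_antider_coeff \<mu>) n * w ^ n)))"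
    by (rule sums_add)
  also have "(\<lambda>n. (\<mu> + 1) * (bessel_antider_coeff \<mu> n * w ^ n) + 2 * (of_nat n * bessel_antider_coeff \<mu> n * w ^ n))
      = (\<lambda>n. bessel_coeff \<mu> n * w ^ n)"
  proof
    fix n
    have c: "(2 * of_nat n + \<mu> + 1) * bessel_antider_coeff \<mu> n = bessel_coeff \<mu> n"
      using Re_le_norm_antider_denom[of \<mu> n] assms by (auto simp: bessel_antider_coeff_def)
    show "(\<mu> + 1) * (bessel_antider_coeff \<mu> n * w ^ n) + 2 * (of_nat n * bessel_antider_coeff \<mu> n * w ^ n)
        = bessel_coeff \<mu> n * w ^ n"
      unfolding c[symmetric] by (simp add: algebra_simps)
  qed
  finally show ?thesis
    unfolding bessel_series_def by (rule sums_unique)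
qed

lemma has_field_derivative_bessel_antider:
  assumes z: "z \<notin> \<real>\<^sub>\<le>\<^sub>0" and \<mu>: "Re \<mu> > -1"
  shows "(bessel_antider \<mu> has_field_derivative bessel_fun \<mu> z) (at z)"
proof -
  have z0: "z \<noteq> 0" and z2: "z / 2 \<notin> \<real>\<^sub>\<le>\<^sub>0"
    using z by (auto simp: complex_nonpos_Reals_iff)
  define w where "w = - (z ^ 2) / 4"
  define D where "D = (\<Sum>n. diffs (bessel_antider_coeff \<mu>) n * w ^ n)"
  have d1: "((\<lambda>z. (z / 2) powr (\<mu> + 1)) has_field_derivative (\<mu> + 1) * (z / 2) powr (\<mu> + 1 - 1) * (1 / 2)) (at z)"
    by (rule DERIV_chain2[where g="\<lambda>z. z / 2", OF has_field_derivative_powr[OF z2]])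
       (auto intro!: derivative_eq_intros)
  have d2: "((\<lambda>z. bessel_antider_series \<mu> (- (z ^ 2) / 4)) has_field_derivative D * (- z / 2)) (at z)"
    unfolding D_def w_def bessel_antider_series_def[abs_def]
    by (rule DERIV_chain2[OF termdiffs_strong_converges_everywhere[OF summable_bessel_antider_series[OF \<mu>]]])
       (auto intro!: derivative_eq_intros)
  have p: "(z / 2) powr (\<mu> + 1) = (z / 2) powr \<mu> * (z / 2)"
    using powr_add_one z0 by simp
  then have p': "(z / 2) powr (1 + \<mu>) = (z / 2) powr \<mu> * (z / 2)"
    by (simp only: add.commute)
  have e: "bessel_fun \<mu> z = (z / 2) powr \<mu> * ((\<mu> + 1) * bessel_antider_series \<mu> w + 2 * (w * D))"
    unfolding bessel_fun_def D_def w_def bessel_antider_series_ode[OF \<mu>] ..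
  show ?thesis
    unfolding bessel_antider_def[abs_def] mult.assoc e
    by (rule DERIV_cong[OF DERIV_cmult[OF DERIV_mult[OF d1 d2]]])
       (use z0 in \<open>simp add: p p' w_def field_simps power2_eq_square\<close>)
qed

lemma continuous_on_bessel_antider:
  assumes "Re \<mu> > -1"
  shows "continuous_on {0..} (\<lambda>s. bessel_antider \<mu> (of_real s))"
proof -
  have "continuous_on UNIV (bessel_antider_series \<mu>)"
    unfolding bessel_antider_series_def[abs_def]
    by (rule continuous_at_imp_continuous_on)
       (auto intro: DERIV_isCont termdiffs_strong_converges_everywhere[OF summable_bessel_antider_series[OF assms]])
  then have u: "continuous_on {0..} (\<lambda>s::real. bessel_antider_series \<mu> (- (of_real s ^ 2) / 4))"
    by (rule continuous_on_compose2) (auto intro!: continuous_intros)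
  have p: "continuous_on {0..} (\<lambda>s::real. (of_real s / 2) powr (\<mu> + 1))"
    using assms by (intro continuous_on_powr_complex) (auto intro!: continuous_intros)
  show ?thesis
    unfolding bessel_antider_def by (intro continuous_intros p u)
qed

definition bessel_energy :: "complex \<Rightarrow> real \<Rightarrow> real" where
  "bessel_energy \<nu> s = (norm (bessel_fun \<nu> (of_real s)))\<^sup>2 + (norm (bessel_deriv \<nu> (of_real s)))\<^sup>2"

lemma bessel_energy_deriv:
  assumes "s > 0"
  shows "\<exists>D. (bessel_energy \<nu> has_real_derivative D) (at s) \<and> D \<le> (norm \<nu>)\<^sup>2 / s\<^sup>2 * bessel_energy \<nu> s"
proof -
  define a where "a = bessel_fun \<nu> (of_real s)"
  define b where "b = bessel_deriv \<nu> (of_real s)"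
  define q where "q = \<nu>\<^sup>2 / (of_real s)\<^sup>2"
  have dY: "((\<lambda>s. bessel_fun \<nu> (of_real s)) has_vector_derivative b) (at s)"
    using has_vector_derivative_real_field[OF has_field_derivative_bessel_fun[OF nonpos_Reals_of_real_pos[OF assms]]]
    by (simp add: b_def bessel_deriv_def)
  have dZ: "((\<lambda>s. bessel_deriv \<nu> (of_real s)) has_vector_derivative (q - 1) * a - b / of_real s) (at s)"
    unfolding a_def b_def q_def
    by (rule has_vector_derivative_real_field[OF has_field_derivative_bessel_deriv[OF nonpos_Reals_of_real_pos[OF assms]]])
  have deriv: "(bessel_energy \<nu> has_real_derivative 2 * Re (b * cnj a) + 2 * Re (((q - 1) * a - b / of_real s) * cnj b)) (at s)"
    using DERIV_add[OF has_real_derivative_norm_power2[OF dY] has_real_derivative_norm_power2[OF dZ]]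
    by (simp add: bessel_energy_def[abs_def] a_def b_def)
  have "2 * Re (b * cnj a) + 2 * Re (((q - 1) * a - b / of_real s) * cnj b)
      = 2 * Re (q * a * cnj b) - 2 * (norm b)\<^sup>2 / s"
    using assms by (simp add: cmod_power2 algebra_simps add_divide_distrib) (simp add: power2_eq_square algebra_simps)
  also have "\<dots> \<le> 2 * Re (q * a * cnj b)"
    using assms by simp
  also have "\<dots> \<le> norm q * (2 * (norm a * norm b))"
    using complex_Re_le_cmod[of "q * a * cnj b"] by (simp add: norm_mult)
  also have "\<dots> \<le> norm q * ((norm a)\<^sup>2 + (norm b)\<^sup>2)"
    using sum_squares_bound[of "norm a" "norm b"] by (intro mult_left_mono) (simp_all add: mult.assoc)
  also have "\<dots> = (norm \<nu>)\<^sup>2 / s\<^sup>2 * bessel_energy \<nu> s"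
    using assms by (simp add: q_def a_def b_def bessel_energy_def norm_divide norm_power)
  finally show ?thesis
    using deriv by blast
qed

lemma bessel_fun_bessel_deriv_bounded:
  obtains B where "\<And>s. s \<ge> 1 \<Longrightarrow> norm (bessel_fun \<nu> (of_real s)) \<le> B \<and> norm (bessel_deriv \<nu> (of_real s)) \<le> B"
proof
  fix s :: real
  assume s: "s \<ge> 1"
  let ?K = "(norm \<nu>)\<^sup>2"
  have "0 \<le> bessel_energy \<nu> s" and "1 \<le> exp (?K / s)"
    using s by (simp_all add: bessel_energy_def)
  then have "bessel_energy \<nu> s \<le> bessel_energy \<nu> s * exp (?K / s)"
    by (metis mult.right_neutral mult_left_mono)
  also have "\<dots> \<le> bessel_energy \<nu> 1 * exp ?K"
    using gronwall_inverse_square[OF bessel_energy_deriv s] by simp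
  finally show "norm (bessel_fun \<nu> (of_real s)) \<le> sqrt (bessel_energy \<nu> 1 * exp ?K)
      \<and> norm (bessel_deriv \<nu> (of_real s)) \<le> sqrt (bessel_energy \<nu> 1 * exp ?K)"
    unfolding bessel_energy_def
    by (auto intro!: real_le_rsqrt elim: order_trans[rotated] simp: add_increasing add_increasing2)
qed

text \<open>Unlike that of the antiderivative alone, this derivative is integrable at infinity.\<close>

lemma has_field_derivative_bessel_antider_corrected:
  assumes z: "z \<notin> \<real>\<^sub>\<le>\<^sub>0" and \<nu>: "Re \<nu> > -1"
  shows "((\<lambda>z. bessel_antider \<nu> z + bessel_deriv \<nu> z + bessel_fun \<nu> z / z) has_field_derivative
           (\<nu>\<^sup>2 - 1) / z\<^sup>2 * bessel_fun \<nu> z) (at z)"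
proof -
  have z0: "z \<noteq> 0"
    using z by auto
  have "(bessel_fun \<nu> has_field_derivative bessel_deriv \<nu> z) (at z)"
    using has_field_derivative_bessel_fun[OF z] by (simp add: bessel_deriv_def)
  from DERIV_add[OF DERIV_add[OF has_field_derivative_bessel_antider[OF z \<nu>] has_field_derivative_bessel_deriv[OF z]]
      DERIV_divide[OF this DERIV_ident z0]]
  show ?thesis
    by (rule DERIV_cong) (use z0 in \<open>simp add: field_simps power2_eq_square\<close>)
qed

lemma bessel_antider_bounded_at_top:
  assumes \<nu>: "Re \<nu> > -1"
  obtains M where "\<And>s. s \<ge> 1 \<Longrightarrow> norm (bessel_antider \<nu> (of_real s)) \<le> M"
proof -
  obtain B where B: "\<And>s. s \<ge> 1 \<Longrightarrow> norm (bessel_fun \<nu> (of_real s)) \<le> B \<and> norm (bessel_deriv \<nu> (of_real s)) \<le> B"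
    using bessel_fun_bessel_deriv_bounded by blast
  define G where "G z = bessel_antider \<nu> z + bessel_deriv \<nu> z + bessel_fun \<nu> z / z" for z
  have G_diff: "norm (G (of_real s) - G (of_real 1)) \<le> norm (\<nu>\<^sup>2 - 1) * B" if "s \<ge> 1" for s
  proof (rule norm_diff_le_of_deriv_inverse_square[OF that])
    fix t :: real assume t: "t \<in> {1..s}"
    then show "((\<lambda>t. G (of_real t)) has_vector_derivative (\<nu>\<^sup>2 - 1) / (of_real t)\<^sup>2 * bessel_fun \<nu> (of_real t))
        (at t within {1..s})"
      unfolding G_def[abs_def]
      by (intro has_vector_derivative_real_field has_field_derivative_bessel_antider_corrected
            nonpos_Reals_of_real_pos \<nu>) auto
    show "norm ((\<nu>\<^sup>2 - 1) / (of_real t)\<^sup>2 * bessel_fun \<nu> (of_real t)) \<le> norm (\<nu>\<^sup>2 - 1) * B / t\<^sup>2"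
      using t B[of t] by (auto simp: norm_mult norm_divide norm_power intro!: mult_left_mono divide_right_mono)
  qed
  show ?thesis
  proof (rule that)
    fix s :: real assume "s \<ge> 1"
    have "bessel_antider \<nu> (of_real s) = G (of_real s) - bessel_deriv \<nu> (of_real s) - bessel_fun \<nu> (of_real s) / of_real s"
      by (simp add: G_def)
    also have "norm \<dots> \<le> norm (G (of_real s)) + norm (bessel_deriv \<nu> (of_real s)) + norm (bessel_fun \<nu> (of_real s))"
    proof -
      have "norm (bessel_fun \<nu> (of_real s) / of_real s) \<le> norm (bessel_fun \<nu> (of_real s))"
        using \<open>s \<ge> 1\<close> by (simp add: norm_divide divide_le_eq mult_le_cancel_left1
            order_trans[OF _ mult_right_mono[of 1 s]])
      then show ?thesis
        using norm_triangle_ineq4[of "G (of_real s) - bessel_deriv \<nu> (of_real s)" "bessel_fun \<nu> (of_real s) / of_real s"]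
          norm_triangle_ineq4[of "G (of_real s)" "bessel_deriv \<nu> (of_real s)"]
        by linarith
    qed
    also have "\<dots> \<le> norm (G 1) + norm (\<nu>\<^sup>2 - 1) * B + 2 * B"
      using G_diff[OF \<open>s \<ge> 1\<close>] B[OF \<open>s \<ge> 1\<close>] norm_triangle_sub[of "G (of_real s)" "G (of_real 1)"] by simp
    finally show "norm (bessel_antider \<nu> (of_real s)) \<le> norm (G 1) + norm (\<nu>\<^sup>2 - 1) * B + 2 * B" .
  qed
qed

lemma bessel_antider_bounded:
  assumes \<nu>: "Re \<nu> > -1"
  obtains M where "\<And>s. s \<ge> 0 \<Longrightarrow> norm (bessel_antider \<nu> (of_real s)) \<le> M"
proof -
  obtain M1 where far: "\<And>s. s \<ge> 1 \<Longrightarrow> norm (bessel_antider \<nu> (of_real s)) \<le> M1"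
    using bessel_antider_bounded_at_top[OF \<nu>] by blast
  obtain M0 where near: "\<And>s. s \<in> {0..1} \<Longrightarrow> norm (bessel_antider \<nu> (of_real s)) \<le> M0"
    using continuous_on_compact_bound[OF compact_Icc continuous_on_subset[OF continuous_on_bessel_antider[OF \<nu>]]]
    by (metis atLeastAtMost_iff atLeast_iff subsetI)
  show ?thesis
  proof (rule that)
    fix s :: real assume "s \<ge> 0"
    then show "norm (bessel_antider \<nu> (of_real s)) \<le> max M0 M1"
      using near[of s] far[of s] by (cases "s \<le> 1") auto
  qed
qed

section \<open>The oscillatory integral\<close>

lemma bessel_fun_integral_comp_bound:
  fixes \<phi> \<phi>' \<phi>'' :: "real \<Rightarrow> real"
  assumes \<nu>: "Re \<nu> > -1" and "p \<le> q" and "finite Z"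
    and \<phi>: "\<And>x. x \<in> {p..q} \<Longrightarrow> (\<phi> has_real_derivative \<phi>' x) (at x within {p..q})"
    and \<phi>': "\<And>x. x \<in> {p..q} \<Longrightarrow> (\<phi>' has_real_derivative \<phi>'' x) (at x within {p..q})"
    and \<phi>''_cont: "continuous_on {p..q} \<phi>''"
    and \<phi>'_nz: "\<And>x. x \<in> {p..q} \<Longrightarrow> \<phi>' x \<noteq> 0"
    and \<phi>_nonneg: "\<And>x. x \<in> {p..q} \<Longrightarrow> \<phi> x \<ge> 0"
    and \<phi>_pos: "\<And>x. x \<in> {p..q} - Z \<Longrightarrow> \<phi> x > 0"
  obtains C where "\<And>\<omega>. \<omega> > 0 \<Longrightarrow> (\<lambda>x. bessel_fun \<nu> (of_real (\<omega> * \<phi> x))) integrable_on {p..q}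
      \<and> norm (integral {p..q} (\<lambda>x. bessel_fun \<nu> (of_real (\<omega> * \<phi> x)))) \<le> C / \<omega>"
proof -
  obtain M where M: "\<And>s. s \<ge> 0 \<Longrightarrow> norm (bessel_antider \<nu> (of_real s)) \<le> M"
    using bessel_antider_bounded[OF \<nu>] by blast
  have "((\<lambda>s. bessel_antider \<nu> (of_real s)) has_vector_derivative bessel_fun \<nu> (of_real s)) (at s)"
    if "s > 0" for s
    by (rule has_vector_derivative_real_field[OF has_field_derivative_bessel_antider[OF nonpos_Reals_of_real_pos[OF that] \<nu>]])
  from integral_comp_antiderivative_bound[OF continuous_on_bessel_antider[OF \<nu>] this M \<open>p \<le> q\<close> \<open>finite Z\<close>
      \<phi> \<phi>' \<phi>''_cont \<phi>'_nz \<phi>_nonneg \<phi>_pos] that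
  show ?thesis
    by blast
qed

text \<open>On the negative axis the principal branch of \<open>(z/2)\<^sup>\<nu>\<close> contributes the factor \<open>exp(i\<pi>\<nu>)\<close>.\<close>

lemma bessel_J_of_real_eq_sign:
  assumes "\<sigma> = 1 \<or> \<sigma> = -1" and "\<sigma> * t > 0"
  shows "bessel_J \<nu> (of_real t) = (if \<sigma> = 1 then 1 else exp (\<i> * pi * \<nu>)) * bessel_fun \<nu> (of_real (\<sigma> * t))"
proof -
  have "bessel_J \<nu> (of_real t) = bessel_fun \<nu> (of_real t)"
    using assms by (intro bessel_J_eq_bessel_fun) auto
  then show ?thesis
    using assms bessel_fun_minus_real[of "- t" \<nu>] by auto
qed

lemma bessel_J_integral_one_sided_bound:
  fixes g g' g'' :: "real \<Rightarrow> real"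
  assumes \<nu>: "Re \<nu> > -1" and "p \<le> q" and e: "e \<in> {p, q}"
    and g: "\<And>x. x \<in> {p..q} \<Longrightarrow> (g has_real_derivative g' x) (at x within {p..q})"
    and g': "\<And>x. x \<in> {p..q} \<Longrightarrow> (g' has_real_derivative g'' x) (at x within {p..q})"
    and g''_cont: "continuous_on {p..q} g''"
    and g'_nz: "\<And>x. x \<in> {p..q} \<Longrightarrow> g' x \<noteq> 0"
    and "g e = 0" and g_nz: "\<And>x. x \<in> {p..q} - {e} \<Longrightarrow> g x \<noteq> 0"
  obtains C where "\<And>\<omega>. \<omega> > 0 \<Longrightarrow> (\<lambda>x. bessel_J \<nu> (of_real (\<omega> * g x))) integrable_on {p..q}
      \<and> norm (integral {p..q} (\<lambda>x. bessel_J \<nu> (of_real (\<omega> * g x)))) \<le> C / \<omega>"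
proof -
  have "connected ({p..q} - {e})"
    using e by (auto simp: is_interval_connected_1[symmetric] is_interval_1)
  moreover have "continuous_on ({p..q} - {e}) g"
    by (rule continuous_on_subset[OF DERIV_continuous_on[OF g]]) auto
  ultimately obtain \<sigma> where \<sigma>: "\<sigma> = 1 \<or> \<sigma> = -1" and pos: "\<And>x. x \<in> {p..q} - {e} \<Longrightarrow> \<sigma> * g x > 0"
    using connected_nonvanishing_sign g_nz by metis
  obtain C where C: "\<And>\<omega>. \<omega> > 0 \<Longrightarrow> (\<lambda>x. bessel_fun \<nu> (of_real (\<omega> * (\<sigma> * g x)))) integrable_on {p..q}
      \<and> norm (integral {p..q} (\<lambda>x. bessel_fun \<nu> (of_real (\<omega> * (\<sigma> * g x))))) \<le> C / \<omega>"
  proof (rule bessel_fun_integral_comp_bound[OF \<nu> \<open>p \<le> q\<close>, of "{e}" "\<lambda>x. \<sigma> * g x" "\<lambda>x. \<sigma> * g' x" "\<lambda>x. \<sigma> * g'' x"])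
    fix x assume x: "x \<in> {p..q}"
    show "((\<lambda>x. \<sigma> * g x) has_real_derivative \<sigma> * g' x) (at x within {p..q})"
      and "((\<lambda>x. \<sigma> * g' x) has_real_derivative \<sigma> * g'' x) (at x within {p..q})"
      using g[OF x] g'[OF x] by (auto intro: DERIV_cmult)
    show "\<sigma> * g' x \<noteq> 0"
      using g'_nz[OF x] \<sigma> by auto
    show "\<sigma> * g x \<ge> 0"
      using pos[of x] x \<open>g e = 0\<close> by (cases "x = e") auto
  qed (use that g''_cont pos in \<open>auto intro: continuous_intros\<close>)
  define c where "c = (if \<sigma> = 1 then 1 else exp (\<i> * pi * \<nu>))"
  have J_eq: "bessel_J \<nu> (of_real (\<omega> * g x)) = c * bessel_fun \<nu> (of_real (\<omega> * (\<sigma> * g x)))"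
    if "x \<in> {p..q} - {e}" and "\<omega> > 0" for x \<omega>
    using bessel_J_of_real_eq_sign[OF \<sigma>, of "\<omega> * g x" \<nu>] pos[OF that(1)] that(2)
    by (simp add: c_def algebra_simps)
  show ?thesis
  proof (rule that[of "norm c * C"], rule conjI)
    fix \<omega> :: real assume "\<omega> > 0"
    have "(\<lambda>x. c * bessel_fun \<nu> (of_real (\<omega> * (\<sigma> * g x)))) integrable_on {p..q}"
      using C[OF \<open>\<omega> > 0\<close>] by (intro integrable_on_mult_right) blast
    then show "(\<lambda>x. bessel_J \<nu> (of_real (\<omega> * g x))) integrable_on {p..q}"
      by (rule integrable_spike[OF _ negligible_sing[of e]]) (use J_eq \<open>\<omega> > 0\<close> in auto)
    have "integral {p..q} (\<lambda>x. bessel_J \<nu> (of_real (\<omega> * g x)))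
        = integral {p..q} (\<lambda>x. c * bessel_fun \<nu> (of_real (\<omega> * (\<sigma> * g x))))"
      by (rule integral_spike[OF negligible_sing[of e]]) (use J_eq \<open>\<omega> > 0\<close> in auto)
    also have "\<dots> = c * integral {p..q} (\<lambda>x. bessel_fun \<nu> (of_real (\<omega> * (\<sigma> * g x))))"
      by simp
    finally show "norm (integral {p..q} (\<lambda>x. bessel_J \<nu> (of_real (\<omega> * g x)))) \<le> norm c * C / \<omega>"
      using mult_left_mono[OF conjunct2[OF C[OF \<open>\<omega> > 0\<close>]] norm_ge_zero[of c]] by (simp add: norm_mult)
  qed
qed

lemma bessel_J_integral_bound:
  fixes g g' g'' :: "real \<Rightarrow> real"
  assumes \<nu>: "Re \<nu> > -1" and \<xi>: "\<xi> \<in> {a..b}"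
    and g: "\<And>x. x \<in> {a..b} \<Longrightarrow> (g has_real_derivative g' x) (at x within {a..b})"
    and g': "\<And>x. x \<in> {a..b} \<Longrightarrow> (g' has_real_derivative g'' x) (at x within {a..b})"
    and g''_cont: "continuous_on {a..b} g''"
    and g'_nz: "\<And>x. x \<in> {a..b} \<Longrightarrow> g' x \<noteq> 0"
    and "g \<xi> = 0" and g_nz: "\<And>x. x \<in> {a..b} - {\<xi>} \<Longrightarrow> g x \<noteq> 0"
  obtains C where "\<And>\<omega>. \<omega> > 0 \<Longrightarrow> norm (integral {a..b} (\<lambda>x. bessel_J \<nu> (of_real (\<omega> * g x)))) \<le> C / \<omega>"
proof -
  let ?J = "\<lambda>\<omega> x. bessel_J \<nu> (of_real (\<omega> * g x))"
  have piece: "\<exists>C. \<forall>\<omega>>0. ?J \<omega> integrable_on {p..q} \<and> norm (integral {p..q} (?J \<omega>)) \<le> C / \<omega>"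
    if "{p..q} \<subseteq> {a..b}" "p \<le> q" "\<xi> \<in> {p, q}" for p q
  proof (rule bessel_J_integral_one_sided_bound[OF \<nu> \<open>p \<le> q\<close> \<open>\<xi> \<in> {p, q}\<close>, of g g' g''])
    fix x assume "x \<in> {p..q}"
    then show "(g has_real_derivative g' x) (at x within {p..q})"
      and "(g' has_real_derivative g'' x) (at x within {p..q})"
      using DERIV_subset g g' that(1) by blast+
  qed (use that g''_cont g'_nz \<open>g \<xi> = 0\<close> g_nz in \<open>auto intro: continuous_on_subset\<close>)
  have "a \<le> \<xi>" "\<xi> \<le> b"
    using \<xi> by auto
  obtain CL where CL: "\<forall>\<omega>>0. ?J \<omega> integrable_on {a..\<xi>} \<and> norm (integral {a..\<xi>} (?J \<omega>)) \<le> CL / \<omega>"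
    using piece[of a \<xi>] \<open>a \<le> \<xi>\<close> \<open>\<xi> \<le> b\<close> by auto
  obtain CR where CR: "\<forall>\<omega>>0. ?J \<omega> integrable_on {\<xi>..b} \<and> norm (integral {\<xi>..b} (?J \<omega>)) \<le> CR / \<omega>"
    using piece[of \<xi> b] \<open>a \<le> \<xi>\<close> \<open>\<xi> \<le> b\<close> by auto
  show ?thesis
  proof (rule that[of "CL + CR"])
    fix \<omega> :: real assume "\<omega> > 0"
    have "?J \<omega> integrable_on {a..b}"
      using Henstock_Kurzweil_Integration.integrable_combine[OF \<open>a \<le> \<xi>\<close> \<open>\<xi> \<le> b\<close>] CL CR \<open>\<omega> > 0\<close> by blast
    with \<open>a \<le> \<xi>\<close> \<open>\<xi> \<le> b\<close>
    have "integral {a..b} (?J \<omega>) = integral {a..\<xi>} (?J \<omega>) + integral {\<xi>..b} (?J \<omega>)"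
      by (rule Henstock_Kurzweil_Integration.integral_combine[symmetric])
    then show "norm (integral {a..b} (?J \<omega>)) \<le> (CL + CR) / \<omega>"
      using CL[rule_format, OF \<open>\<omega> > 0\<close>] CR[rule_format, OF \<open>\<omega> > 0\<close>] norm_triangle_ineq[of "integral {a..\<xi>} (?J \<omega>)" "integral {\<xi>..b} (?J \<omega>)"]
      by (simp add: add_divide_distrib)
  qed
qed

theorem lemma2p8:
  fixes \<nu> :: complex and g :: "real \<Rightarrow> real" and a b \<xi> :: real
    and G :: "nat \<Rightarrow> real \<Rightarrow> real"
  assumes "Re \<nu> > -1"
    and "a < b"
    and "smooth_on_interval g a b G"
    and "\<forall>x\<in>{a..b}. G 1 x \<noteq> 0"
    and "\<xi> \<in> {a..b}" and "g \<xi> = 0"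
    and "\<forall>x\<in>{a..b} - {\<xi>}. g x \<noteq> 0"
  shows "(\<lambda>\<omega>::real. integral {a..b} (\<lambda>x. bessel_J \<nu> (complex_of_real (\<omega> * g x))))
           \<in> O[at_top](\<lambda>\<omega>. complex_of_real (1 / \<omega>))"
proof -
  have G: "\<And>n x. x \<in> {a..b} \<Longrightarrow> (G n has_real_derivative G (Suc n) x) (at x within {a..b})"
    and "G 0 = g"
    using assms(3) by (auto simp: smooth_on_interval_def)
  then have "\<And>x. x \<in> {a..b} \<Longrightarrow> (g has_real_derivative G 1 x) (at x within {a..b})"
    and "\<And>x. x \<in> {a..b} \<Longrightarrow> (G 1 has_real_derivative G 2 x) (at x within {a..b})"
    and "continuous_on {a..b} (G 2)"
    using DERIV_continuous_on[OF G[of _ 2]] by (auto simp: numeral_2_eq_2 numeral_3_eq_3)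
  then obtain C where C: "\<And>\<omega>. \<omega> > 0 \<Longrightarrow> norm (integral {a..b} (\<lambda>x. bessel_J \<nu> (of_real (\<omega> * g x)))) \<le> C / \<omega>"
    using bessel_J_integral_bound[OF assms(1,5)] assms(4,6,7) by blast
  have "\<forall>\<^sub>F \<omega> in at_top. norm (integral {a..b} (\<lambda>x. bessel_J \<nu> (of_real (\<omega> * g x))))
      \<le> C * norm (complex_of_real (1 / \<omega>))"
    using eventually_gt_at_top[of 0]
  proof eventually_elim
    case (elim \<omega>)
    then show ?case
      using C[OF elim] by (simp add: norm_divide)
  qed
  then show ?thesis
    by (rule bigoI)
qed

end
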